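(* For every spherically symmetric solution $\psi$ of the wave equation, the quantity $$\partial_r\psi+\frac1M\psi$$ is conserved along $\mathcal H^+$ (i.e. its value on $\mathcal H^+$ is independent of $v$). Consequently, for generic initial data this quantity does not decay along $\mathcal H^+$.
   Context: Fix $M>0$ and let $D(r)=(1-M/r)^2$. The extreme Reissner–Nordström spacetime is described in ingoing Eddington–Finkelstein coordinates $(v,r,\theta,\phi)$, in which $g=-D\,dv^2+2\,dv\,dr+r^2g_{\mathbb S^2}$ with $g_{\mathbb S^2}$ the round metric; $\partial_v,\partial_r$ are its coordinate vector fields. The event horizon is $\mathcal H^+=\{r=M\}$ and $T=\partial_v$ is a Killing field tangent to it. $\Sigma_0$ is a connected, asymptotically flat, SO(3)-invariant spacelike hypersurface terminating at spatial infinity $i^0$ with boundary $\partial\Sigma_0=\Sigma_0\cap\mathcal H^+$, whose future unit normal $n_{\Sigma_0}$ satisfies $C_1<-g(n_{\Sigma_0},T)<C_2$ for constants $0<C_1<C_2$; $\mathcal M=\{r\ge M\}\cap J^+(\Sigma_0)$. A "solution of the wave equation" means a solution of $\Box_g\psi=0$ on $\mathcal M$ with initial data $(\psi|_{\Sigma_0},n_{\Sigma_0}\psi|_{\Sigma_0})\in H^k_{loc}(\Sigma_0)\times H^{k-1}_{loc}(\Sigma_0)$, $k\ge 2$, satisfying $\lim_{x\to i^0}r\psi^2(x)=0$; spherically symmetric means SO(3)-invariant. *)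

theory Defs
  imports "HOL-Analysis.Analysis"
begin

text \<open>Extreme Reissner-Nordstrom in ingoing Eddington-Finkelstein coordinates (v,r).
  An SO(3)-invariant function is represented as a function of (v,r).\<close>

definition ERN_D :: "real \<Rightarrow> real \<Rightarrow> real" where
  "ERN_D M r = (1 - M / r)^2"

definition pv :: "(real \<Rightarrow> real \<Rightarrow> real) \<Rightarrow> real \<Rightarrow> real \<Rightarrow> real" where
  "pv f v r = deriv (\<lambda>t. f t r) v"

definition pr :: "(real \<Rightarrow> real \<Rightarrow> real) \<Rightarrow> real \<Rightarrow> real \<Rightarrow> real" where
  "pr f v r = deriv (\<lambda>s. f v s) r"

definition C2_on :: "(real \<times> real) set \<Rightarrow> (real \<Rightarrow> real \<Rightarrow> real) \<Rightarrow> bool" where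
  "C2_on U f \<longleftrightarrow>
     (\<forall>g\<in>{f, pv f, pr f}. \<forall>(v,r)\<in>U.
        (\<lambda>t. g t r) differentiable (at v) \<and> (\<lambda>s. g v s) differentiable (at r)) \<and>
     (\<forall>g\<in>{f, pv f, pr f, pv (pv f), pv (pr f), pr (pv f), pr (pr f)}.
        continuous_on U (\<lambda>(v,r). g v r))"

text \<open>Wave operator \<open>\<box>_g\<close> of g = -D dv^2 + 2 dv dr + r^2 g_S2 acting on SO(3)-invariant
  functions: inverse metric g^vv = 0, g^vr = 1, g^rr = D, sqrt|det g| = r^2 sin theta, so
  \<open>\<box>_g \<psi> = r^-2 (\<partial>_v(r^2 \<partial>_r \<psi>) + \<partial>_r(r^2 \<partial>_v \<psi> + r^2 D \<partial>_r \<psi>))\<close>.\<close>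
definition wave_op :: "real \<Rightarrow> (real \<Rightarrow> real \<Rightarrow> real) \<Rightarrow> real \<Rightarrow> real \<Rightarrow> real" where
  "wave_op M f v r =
     (1 / r^2) * (pv (\<lambda>v r. r^2 * pr f v r) v r
                + pr (\<lambda>v r. r^2 * pv f v r + r^2 * ERN_D M r * pr f v r) v r)"

end

theory Submission
  imports Defs
begin

text \<open>On the horizon \<open>r = M\<close> the function \<open>D\<close> has a double zero, so in \<open>\<box>\<psi> = 0\<close> at \<open>r = M\<close> the
  terms carrying \<open>D\<close> or \<open>D'\<close> drop out. After commuting the mixed partials (Schwarz) what is left is
  \<open>2 \<partial>\<^sub>v (\<partial>\<^sub>r\<psi> + \<psi>/M) = 0\<close>, so \<open>\<partial>\<^sub>r\<psi> + \<psi>/M\<close> is constant along the horizon, and a nonzero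
  constant does not tend to zero.\<close>

lemma MVT_deriv:
  fixes F :: "real \<Rightarrow> real"
  assumes "a < b" and "\<And>x. x \<in> {a..b} \<Longrightarrow> F differentiable at x"
  obtains z where "z \<in> {a<..<b}" "F b - F a = (b - a) * deriv F z"
proof -
  have "continuous_on {a..b} F"
    using assms(2) by (intro continuous_at_imp_continuous_on) (auto intro: differentiable_imp_continuous_within)
  with MVT[OF assms(1)] assms(2) obtain l z where
    "a < z" "z < b" "DERIV F z :> l" "F b - F a = (b - a) * l" by force
  then show thesis using that DERIV_imp_deriv by fastforce
qed

lemma second_difference_MVT:
  fixes f :: "real \<Rightarrow> real \<Rightarrow> real"
  assumes h: "h > 0"
    and dx: "\<And>x y. x \<in> {a..a+h} \<Longrightarrow> y \<in> {b..b+h} \<Longrightarrow> (\<lambda>t. f t y) differentiable at x"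
    and dyx: "\<And>x y. x \<in> {a..a+h} \<Longrightarrow> y \<in> {b..b+h} \<Longrightarrow> (\<lambda>s. pv f x s) differentiable at y"
  obtains \<xi> \<eta> where "\<xi> \<in> {a<..<a+h}" "\<eta> \<in> {b<..<b+h}"
    "f (a+h) (b+h) - f (a+h) b - f a (b+h) + f a b = h^2 * pr (pv f) \<xi> \<eta>"
proof -
  define g where "g t = f t (b+h) - f t b" for t
  have g_deriv: "DERIV g x :> pv f x (b+h) - pv f x b" if "x \<in> {a..a+h}" for x
    unfolding g_def pv_def using that h
    by (intro DERIV_diff) (auto simp: DERIV_deriv_iff_real_differentiable intro!: dx)
  obtain \<xi> where \<xi>: "\<xi> \<in> {a<..<a+h}" "g (a+h) - g a = h * deriv g \<xi>"
    using MVT_deriv[of a "a+h" g] g_deriv h by (auto simp: real_differentiable_def)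
  obtain \<eta> where \<eta>: "\<eta> \<in> {b<..<b+h}"
    "pv f \<xi> (b+h) - pv f \<xi> b = h * deriv (\<lambda>s. pv f \<xi> s) \<eta>"
    using MVT_deriv[of b "b+h" "\<lambda>s. pv f \<xi> s"] h dyx \<xi>(1) by auto
  have "f (a+h) (b+h) - f (a+h) b - f a (b+h) + f a b = h * (pv f \<xi> (b+h) - pv f \<xi> b)"
    using \<xi> DERIV_imp_deriv[OF g_deriv, of \<xi>] unfolding g_def by auto
  also have "\<dots> = h^2 * pr (pv f) \<xi> \<eta>"
    using \<eta>(2) by (simp add: pr_def power2_eq_square)
  finally show thesis using that \<xi>(1) \<eta>(1) by blast
qed

lemma C2_on_partial_differentiable:
  assumes "C2_on U f" "(x, y) \<in> U" "g \<in> {f, pv f, pr f}"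
  shows "(\<lambda>t. g t y) differentiable at x" "(\<lambda>s. g x s) differentiable at y"
  using assms unfolding C2_on_def by fast+

lemma C2_on_mixed_partials_continuous:
  assumes "C2_on U f"
  shows "continuous_on U (\<lambda>(x, y). pv (pr f) x y)" "continuous_on U (\<lambda>(x, y). pr (pv f) x y)"
  using assms unfolding C2_on_def by auto

lemma C2_on_mixed_partials_meet_on_square:
  assumes f: "C2_on U f" and h: "h > 0" and sq: "{a..a+h} \<times> {b..b+h} \<subseteq> U"
  obtains \<xi> \<eta> \<xi>' \<eta>' where "\<xi> \<in> {a<..<a+h}" "\<eta> \<in> {b<..<b+h}" "\<xi>' \<in> {a<..<a+h}" "\<eta>' \<in> {b<..<b+h}"
    "pr (pv f) \<xi> \<eta> = pv (pr f) \<xi>' \<eta>'"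
proof -
  have \<partial>: "(\<lambda>t. g t y) differentiable at x" "(\<lambda>s. g x s) differentiable at y"
    if "x \<in> {a..a+h}" "y \<in> {b..b+h}" "g \<in> {f, pv f, pr f}" for g x y
    using C2_on_partial_differentiable[OF f] sq that by blast+
  obtain \<xi> \<eta> where \<xi>\<eta>: "\<xi> \<in> {a<..<a+h}" "\<eta> \<in> {b<..<b+h}"
      and diff_Q: "f (a+h) (b+h) - f (a+h) b - f a (b+h) + f a b = h^2 * pr (pv f) \<xi> \<eta>"
    using second_difference_MVT[where f = f, OF h \<partial>(1)[where g = f] \<partial>(2)[where g = "pv f"]] by blast
  have transpose: "pv (\<lambda>y x. f x y) = (\<lambda>y x. pr f x y)"
    by (simp add: pv_def pr_def fun_eq_iff)
  have "(\<lambda>t. f x t) differentiable at y" if "y \<in> {b..b+h}" "x \<in> {a..a+h}" for x y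
    using \<partial>(2)[where g = f] that by blast
  moreover have "(\<lambda>s. pv (\<lambda>y x. f x y) y s) differentiable at x"
    if "y \<in> {b..b+h}" "x \<in> {a..a+h}" for x y
    unfolding transpose using \<partial>(1)[where g = "pr f"] that by blast
  ultimately obtain \<eta>' \<xi>' where \<xi>\<eta>': "\<eta>' \<in> {b<..<b+h}" "\<xi>' \<in> {a<..<a+h}"
      and "f (a+h) (b+h) - f a (b+h) - f (a+h) b + f a b = h^2 * pr (pv (\<lambda>y x. f x y)) \<eta>' \<xi>'"
    using second_difference_MVT[where f = "\<lambda>y x. f x y" and a = b and b = a, OF h] by blast
  then have diff_P: "f (a+h) (b+h) - f (a+h) b - f a (b+h) + f a b = h^2 * pv (pr f) \<xi>' \<eta>'"
    unfolding transpose by (simp add: pr_def pv_def)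
  show thesis using that \<xi>\<eta> \<xi>\<eta>' diff_Q diff_P h by simp
qed

text \<open>The second difference of \<open>f\<close> on a small square equals \<open>h\<^sup>2\<close> times either
  mixed partial at suitable points, so continuity of both forces them to agree at the corner.\<close>

lemma C2_on_mixed_partials_commute:
  assumes U: "open U" and f: "C2_on U f" and ab: "(a, b) \<in> U"
  shows "pv (pr f) a b = pr (pv f) a b"
proof (rule ccontr)
  let ?P = "\<lambda>x y. pv (pr f) x y" and ?Q = "\<lambda>x y. pr (pv f) x y"
  assume "?P a b \<noteq> ?Q a b"
  define \<epsilon> where "\<epsilon> = dist (?P a b) (?Q a b) / 2"
  have "\<epsilon> > 0" using \<open>?P a b \<noteq> ?Q a b\<close> unfolding \<epsilon>_def by simp
  obtain e where e: "e > 0" "ball (a, b) e \<subseteq> U" using U ab open_contains_ball by blast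
  obtain dP where dP: "dP > 0" "\<And>p. p \<in> U \<Longrightarrow> dist p (a, b) < dP \<Longrightarrow>
      dist (case_prod ?P p) (?P a b) < \<epsilon>"
    using C2_on_mixed_partials_continuous(1)[OF f] ab \<open>\<epsilon> > 0\<close>
    unfolding continuous_on_iff by fastforce
  obtain dQ where dQ: "dQ > 0" "\<And>p. p \<in> U \<Longrightarrow> dist p (a, b) < dQ \<Longrightarrow>
      dist (case_prod ?Q p) (?Q a b) < \<epsilon>"
    using C2_on_mixed_partials_continuous(2)[OF f] ab \<open>\<epsilon> > 0\<close>
    unfolding continuous_on_iff by fastforce
  define h where "h = min e (min dP dQ) / 3"
  have h: "h > 0" using e dP dQ unfolding h_def by simp
  have near: "(x, y) \<in> U \<and> \<bar>?P x y - ?P a b\<bar> < \<epsilon> \<and> \<bar>?Q x y - ?Q a b\<bar> < \<epsilon>"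
    if "x \<in> {a..a+h}" "y \<in> {b..b+h}" for x y
  proof -
    have "dist (x, y) (a, b) \<le> dist x a + dist y b"
      by (simp add: dist_Pair_Pair dist_real_def sqrt_sum_squares_le_sum_abs)
    also have "\<dots> \<le> 2 * h" using that by (simp add: dist_real_def)
    also have "\<dots> < min e (min dP dQ)" using h unfolding h_def by linarith
    finally have "dist (x, y) (a, b) < min e (min dP dQ)" .
    moreover from this have "(x, y) \<in> U" using e(2) by (auto simp: dist_commute)
    ultimately show ?thesis using dP(2) dQ(2) by (auto simp: dist_real_def)
  qed
  then have "{a..a+h} \<times> {b..b+h} \<subseteq> U" by auto
  then obtain \<xi> \<eta> \<xi>' \<eta>' where \<xi>\<eta>: "\<xi> \<in> {a<..<a+h}" "\<eta> \<in> {b<..<b+h}" "\<xi>' \<in> {a<..<a+h}" "\<eta>' \<in> {b<..<b+h}"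
      and "?Q \<xi> \<eta> = ?P \<xi>' \<eta>'"
    using C2_on_mixed_partials_meet_on_square[OF f h] by blast
  moreover have "\<bar>?P \<xi>' \<eta>' - ?P a b\<bar> < \<epsilon>" "\<bar>?Q \<xi> \<eta> - ?Q a b\<bar> < \<epsilon>"
    using near[of \<xi>' \<eta>'] near[of \<xi> \<eta>] \<xi>\<eta> by auto
  ultimately have "dist (?P a b) (?P \<xi>' \<eta>') < 2 * \<epsilon> / 2" "dist (?Q a b) (?P \<xi>' \<eta>') < 2 * \<epsilon> / 2"
    by (simp_all add: dist_real_def abs_minus_commute)
  then have "dist (?P a b) (?Q a b) < 2 * \<epsilon>" by (rule dist_triangle_half_l)
  then show False unfolding \<epsilon>_def by simp
qed

lemma ERN_D_horizon: "M \<noteq> 0 \<Longrightarrow> ERN_D M M = 0"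
  by (simp add: ERN_D_def)

lemma ERN_D_has_derivative_horizon:
  assumes "M \<noteq> 0"
  shows "(ERN_D M has_real_derivative 0) (at M)"
proof -
  have "((\<lambda>r. (1 - M / r)^2) has_real_derivative 2 * (1 - M / M) * (M / M^2)) (at M)"
    using assms by (auto intro!: derivative_eq_intros simp: power2_eq_square)
  then show ?thesis using assms by (simp add: ERN_D_def [abs_def])
qed

lemma wave_op_at_horizon:
  assumes M: "M \<noteq> 0" and f: "C2_on U f" and v: "(v, M) \<in> U"
  shows "wave_op M f v M = pv (pr f) v M + 2 / M * pv f v M + pr (pv f) v M"
proof -
  note \<partial> = C2_on_partial_differentiable[OF f v]
  have flux_v: "DERIV (\<lambda>t. M^2 * pr f t M) v :> M^2 * pv (pr f) v M"
    unfolding pv_def[of "pr f"] using \<partial>(1)[of "pr f"]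
    by (intro DERIV_cmult) (simp add: DERIV_deriv_iff_real_differentiable)
  have pv_r: "DERIV (\<lambda>s. pv f v s) M :> pr (pv f) v M"
    and pr_r: "DERIV (\<lambda>s. pr f v s) M :> pr (pr f) v M"
    unfolding pr_def[of "pv f"] pr_def[of "pr f"] using \<partial>(2)
    by (simp_all add: DERIV_deriv_iff_real_differentiable)
  have "DERIV (\<lambda>s. s^2 * pv f v s + s^2 * ERN_D M s * pr f v s) M
          :> (2 * M * pv f v M + M^2 * pr (pv f) v M)
             + ((2 * M * ERN_D M M + M^2 * 0) * pr f v M + M^2 * ERN_D M M * pr (pr f) v M)"
    by (auto intro!: derivative_eq_intros pv_r pr_r ERN_D_has_derivative_horizon[OF M])
  then have flux_r: "DERIV (\<lambda>s. s^2 * pv f v s + s^2 * ERN_D M s * pr f v s) M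
          :> 2 * M * pv f v M + M^2 * pr (pv f) v M"
    by (simp add: ERN_D_horizon[OF M])
  show ?thesis
    unfolding wave_op_def pv_def[of "\<lambda>v r. r^2 * pr f v r"]
      pr_def[of "\<lambda>v r. r^2 * pv f v r + r^2 * ERN_D M r * pr f v r"]
    using DERIV_imp_deriv[OF flux_v] DERIV_imp_deriv[OF flux_r] M
    by (simp add: field_simps power2_eq_square)
qed

lemma horizon_charge_has_derivative:
  assumes M: "M \<noteq> 0" and U: "open U" and f: "C2_on U f" and v: "(v, M) \<in> U"
  shows "((\<lambda>t. pr f t M + f t M / M) has_real_derivative wave_op M f v M / 2) (at v)"
proof -
  note \<partial> = C2_on_partial_differentiable[OF f v]
  have "((\<lambda>t. pr f t M + f t M / M) has_real_derivative pv (pr f) v M + pv f v M / M) (at v)"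
    unfolding pv_def using \<partial>(1)[of f] \<partial>(1)[of "pr f"]
    by (intro DERIV_add DERIV_cdivide) (simp_all add: DERIV_deriv_iff_real_differentiable)
  moreover have "pv (pr f) v M + pv f v M / M = wave_op M f v M / 2"
    using wave_op_at_horizon[OF M f v] C2_on_mixed_partials_commute[OF U f v] M
    by (simp add: field_simps)
  ultimately show ?thesis by simp
qed

lemma eventually_const_tendsto_eq:
  fixes g :: "'a \<Rightarrow> 'b::t2_space"
  assumes "(g \<longlongrightarrow> l) F" "eventually (\<lambda>x. g x = c) F" "F \<noteq> bot"
  shows "l = c"
  using tendsto_unique[OF assms(3) assms(1) tendsto_eventually[OF assms(2)]] .

theorem proposition12p1:
  fixes M v0 :: real and \<psi> :: "real \<Rightarrow> real \<Rightarrow> real" and U :: "(real \<times> real) set"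
  assumes "M > 0"
    and "open U"
    and "\<forall>v\<ge>v0. (v, M) \<in> U"
    and "C2_on U \<psi>"
    and "\<forall>(v,r)\<in>U. r \<ge> M \<longrightarrow> wave_op M \<psi> v r = 0"
  shows "(\<forall>v\<ge>v0. pr \<psi> v M + \<psi> v M / M = pr \<psi> v0 M + \<psi> v0 M / M) \<and>
         (pr \<psi> v0 M + \<psi> v0 M / M \<noteq> 0 \<longrightarrow>
           \<not> (((\<lambda>v. pr \<psi> v M + \<psi> v M / M) \<longlongrightarrow> 0) at_top))"
proof -
  define H where "H t = pr \<psi> t M + \<psi> t M / M" for t
  have "(H has_real_derivative 0) (at v within {v0..})" if "v \<in> {v0..}" for v
  proof -
    have "(v, M) \<in> U" using assms(3) that by simp
    then have "wave_op M \<psi> v M = 0" using assms(5) by auto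
    then show ?thesis
      using horizon_charge_has_derivative[of M U \<psi> v] assms \<open>(v, M) \<in> U\<close>
      unfolding H_def by (auto intro: has_field_derivative_at_within)
  qed
  then obtain c where "\<forall>v\<in>{v0..}. H v = c"
    using has_field_derivative_zero_constant[OF convex_real_interval(1)] by blast
  then have conserved: "\<forall>v\<ge>v0. H v = H v0" by simp
  moreover have "\<not> (H \<longlongrightarrow> 0) at_top" if "H v0 \<noteq> 0"
  proof
    assume "(H \<longlongrightarrow> 0) at_top"
    moreover have "eventually (\<lambda>v. H v = H v0) at_top"
      unfolding eventually_at_top_linorder using conserved by blast
    ultimately have "0 = H v0" by (rule eventually_const_tendsto_eq) simp
    with that show False by simp
  qed
  ultimately show ?thesis unfolding H_def by blast
qed

end
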